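(* Let $\Gamma$ be a connected, undirected graph without loops on $n$ nodes with Laplacian $\mathbf L=\mathbf K-\mathbf A$, and let $\phi_1,\dots,\phi_n$ be an orthonormal basis of eigenvectors of $\mathbf L$ with $\mathbf L\phi_j=\mu_j\phi_j$. Let $$\mathbf G=\begin{bmatrix}\mathbf 0&\mathbf I\\-\mathbf I&-\mathbf L\end{bmatrix},\qquad \mathbf U=\mathbf G(\mathbf G^T\mathbf G)^{-1/2},$$ $\lambda_j^{P+}=\tfrac12\big[\sqrt{\mu_j^2+4}+\mu_j\big]$ and $\theta_j=2\arctan\lambda_j^{P+}$. Then the eigenvalues of $\mathbf U$ are the $n$ pairs $$\lambda_j^{U\pm}=\cos\theta_j\pm i\sin\theta_j=e^{\pm i\theta_j},\quad j=1,\dots,n,$$ with corresponding normalized eigenvectors $$\psi_j^{U\pm}=\frac{1}{\sqrt2}\begin{bmatrix}\phi_j\\ \pm i\phi_j\end{bmatrix}.$$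
   Context: $\mathbf A$ is the adjacency matrix, $\mathbf K$ the diagonal degree matrix, $\mathbf I,\mathbf 0$ the $n\times n$ identity and zero matrices; $(\mathbf G^T\mathbf G)^{-1/2}$ is the inverse of the positive definite square root of $\mathbf G^T\mathbf G$. *)

theory Defs
  imports Complex_Main "Jordan_Normal_Form.Jordan_Normal_Form"
begin

definition simple_graph_adj :: "nat \<Rightarrow> real mat \<Rightarrow> bool" where
  "simple_graph_adj n A \<longleftrightarrow> A \<in> carrier_mat n n \<and>
     (\<forall>i<n. \<forall>j<n. (A $$ (i,j) = 0 \<or> A $$ (i,j) = 1) \<and> A $$ (i,j) = A $$ (j,i)) \<and>
     (\<forall>i<n. A $$ (i,i) = 0)"

definition connected_adj :: "nat \<Rightarrow> real mat \<Rightarrow> bool" where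
  "connected_adj n A \<longleftrightarrow>
     (\<forall>i<n. \<forall>j<n. (\<lambda>x y. x < n \<and> y < n \<and> A $$ (x,y) = 1)\<^sup>*\<^sup>* i j)"

definition degree_mat :: "nat \<Rightarrow> real mat \<Rightarrow> real mat" where
  "degree_mat n A = mat n n (\<lambda>(i,j). if i = j then (\<Sum>k<n. A $$ (i,k)) else 0)"

definition laplacian :: "nat \<Rightarrow> real mat \<Rightarrow> real mat" where
  "laplacian n A = degree_mat n A - A"

definition inv_mat :: "real mat \<Rightarrow> real mat" where
  "inv_mat M = (THE B. B \<in> carrier_mat (dim_row M) (dim_row M) \<and>
                 M * B = 1\<^sub>m (dim_row M) \<and> B * M = 1\<^sub>m (dim_row M))"

definition pd_sqrt_mat :: "real mat \<Rightarrow> real mat" where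
  "pd_sqrt_mat M = (THE S. S \<in> carrier_mat (dim_row M) (dim_row M) \<and> transpose_mat S = S \<and>
      (\<forall>v \<in> carrier_vec (dim_row M). v \<noteq> 0\<^sub>v (dim_row M) \<longrightarrow> v \<bullet> (S *\<^sub>v v) > 0) \<and>
      S * S = M)"

definition G_mat :: "nat \<Rightarrow> real mat \<Rightarrow> real mat" where
  "G_mat n L = four_block_mat (0\<^sub>m n n) (1\<^sub>m n) (- 1\<^sub>m n) (- L)"

definition U_mat :: "nat \<Rightarrow> real mat \<Rightarrow> real mat" where
  "U_mat n L = G_mat n L * inv_mat (pd_sqrt_mat (transpose_mat (G_mat n L) * G_mat n L))"

end

(* In an orthonormal eigenbasis of L, pairing the coordinates k and n + k, G becomes a direct
   sum of the 2x2 blocks [[0, 1], [-1, -mu]].  The corresponding block M = [[1, mu], [mu, 1 + mu^2]]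
   of G^T G has determinant 1, so its positive definite square root is (M + I) / r with
   r = sqrt (mu^2 + 4), and G times its inverse is the rotation [[-mu/r, 2/r], [-2/r, -mu/r]].
   As lambda = (r + mu) / 2 solves lambda - 1/lambda = mu, the half-angle formulas give
   cos theta = -mu/r and sin theta = 2/r for theta = 2 arctan lambda.  Hence U is orthogonally
   similar to a direct sum of rotations by theta_j, whose eigenvectors (1, +-i) / sqrt 2 have
   eigenvalues exp (+-i theta_j).  Uniqueness of positive definite square roots, shown by a
   trace argument, identifies (G^T G)^(1/2) with this blockwise square root. *)

theory Submission
  imports Defs
begin

section \<open>Positive definite square roots\<close>

definition pos_def_mat :: "nat \<Rightarrow> real mat \<Rightarrow> bool" where
  "pos_def_mat m S \<longleftrightarrow> (\<forall>v \<in> carrier_vec m. v \<noteq> 0\<^sub>v m \<longrightarrow> v \<bullet> (S *\<^sub>v v) > 0)"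

lemma pos_def_mat_nonneg:
  assumes "pos_def_mat m S" "S \<in> carrier_mat m m" "v \<in> carrier_vec m"
  shows "v \<bullet> (S *\<^sub>v v) \<ge> 0"
  using assms unfolding pos_def_mat_def by (cases "v = 0\<^sub>v m") force+

definition mat_trace :: "'a::comm_ring_1 mat \<Rightarrow> 'a" where
  "mat_trace A = (\<Sum>i<dim_row A. A $$ (i,i))"

lemma mat_trace_mult_comm:
  assumes "A \<in> carrier_mat m k" "B \<in> carrier_mat k m"
  shows "mat_trace (A * B) = mat_trace (B * A)"
proof -
  have "mat_trace (A * B) = (\<Sum>i<m. \<Sum>j<k. A $$ (i,j) * B $$ (j,i))"
    using assms by (simp add: mat_trace_def scalar_prod_def lessThan_atLeast0)
  also have "\<dots> = (\<Sum>j<k. \<Sum>i<m. B $$ (j,i) * A $$ (i,j))"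
    by (subst sum.swap) (simp add: mult.commute)
  also have "\<dots> = mat_trace (B * A)"
    using assms by (simp add: mat_trace_def scalar_prod_def lessThan_atLeast0)
  finally show ?thesis .
qed

lemma mat_trace_add:
  assumes "A \<in> carrier_mat m m" "B \<in> carrier_mat m m"
  shows "mat_trace (A + B) = mat_trace A + mat_trace B"
  using assms by (simp add: mat_trace_def sum.distrib)

lemma mat_trace_symmetric_sandwich:
  assumes X: "X \<in> carrier_mat m m" and sym: "transpose_mat X = X" and A: "A \<in> carrier_mat m m"
  shows "mat_trace (X * (A * X)) = (\<Sum>k<m. col X k \<bullet> (A *\<^sub>v col X k))"
proof -
  have "(X * (A * X)) $$ (k,k) = col X k \<bullet> (A *\<^sub>v col X k)" if "k < m" for k
  proof -
    have "row X k = col X k"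
      using col_transpose[of k X] X that sym by simp
    moreover have "(X * (A * X)) $$ (k,k) = row X k \<bullet> col (A * X) k"
      using X A that by (intro index_mult_mat(1)) auto
    ultimately show ?thesis
      using col_mult2[OF A X that] by simp
  qed
  then show ?thesis
    using X by (simp add: mat_trace_def)
qed

lemma pos_def_sandwich_trace_nonneg:
  assumes X: "X \<in> carrier_mat m m" and sym: "transpose_mat X = X"
    and S: "S \<in> carrier_mat m m" and pos: "pos_def_mat m S"
  shows "mat_trace (X * (S * X)) \<ge> 0"
proof -
  have "col X k \<in> carrier_vec m" for k
    using X by (metis carrier_matD(1) col_dim)
  then show ?thesis
    unfolding mat_trace_symmetric_sandwich[OF X sym S] by (intro sum_nonneg pos_def_mat_nonneg[OF pos S])
qed

lemma pos_def_sandwich_trace_eq_0: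
  assumes X: "X \<in> carrier_mat m m" and sym: "transpose_mat X = X"
    and S: "S \<in> carrier_mat m m" and pos: "pos_def_mat m S"
    and zero: "mat_trace (X * (S * X)) = 0"
  shows "X = 0\<^sub>m m m"
proof -
  have col: "col X k \<in> carrier_vec m" for k
    using X by (metis carrier_matD(1) col_dim)
  have form_zero: "col X k \<bullet> (S *\<^sub>v col X k) = 0" if "k < m" for k
    using zero sum_nonneg_eq_0_iff[of "{..<m}" "\<lambda>k. col X k \<bullet> (S *\<^sub>v col X k)",
        OF finite_lessThan pos_def_mat_nonneg[OF pos S col]] that
    unfolding mat_trace_symmetric_sandwich[OF X sym S] by simp
  have col_zero: "col X k = 0\<^sub>v m" if "k < m" for k
  proof (rule ccontr)
    assume "col X k \<noteq> 0\<^sub>v m"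
    then have "col X k \<bullet> (S *\<^sub>v col X k) > 0"
      using pos col unfolding pos_def_mat_def by blast
    with form_zero[OF that] show False by simp
  qed
  show ?thesis
  proof (rule eq_matI)
    fix i j assume "i < dim_row (0\<^sub>m m m :: real mat)" "j < dim_col (0\<^sub>m m m :: real mat)"
    then have ij: "i < m" "j < m" by auto
    then have "X $$ (i,j) = col X j $ i"
      using X by simp
    then show "X $$ (i,j) = 0\<^sub>m m m $$ (i,j)"
      using col_zero[OF ij(2)] ij by simp
  qed (use X in auto)
qed

lemma pos_def_sqrt_unique:
  assumes S: "S \<in> carrier_mat m m" and T: "T \<in> carrier_mat m m"
    and S_sym: "transpose_mat S = S" and T_sym: "transpose_mat T = T"
    and S_pos: "pos_def_mat m S" and T_pos: "pos_def_mat m T" and sq: "S * S = T * T"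
  shows "S = T"
proof -
  define X where "X = S - T"
  have X: "X \<in> carrier_mat m m"
    unfolding X_def using S T by (simp add: minus_carrier_mat)
  have X_sym: "transpose_mat X = X"
    unfolding X_def using S T S_sym T_sym by (metis transpose_minus)
  \<comment> \<open>\<open>S X + X T = S\<^sup>2 - T\<^sup>2 = 0\<close>, and pairing with \<open>X\<close> splits this into two nonnegative traces.\<close>
  have "S * X + X * T = 0\<^sub>m m m"
  proof -
    have "S * X + X * T = (S * S - S * T) + (S * T - T * T)"
      unfolding X_def using S T by (simp add: mult_minus_distrib_mat minus_mult_distrib_mat)
    then show ?thesis
      using S T sq by (intro eq_matI) auto
  qed
  then have "mat_trace (X * (S * X + X * T)) = 0"
    using X by (simp add: mat_trace_def)
  then have "mat_trace (X * (S * X)) + mat_trace (X * (X * T)) = 0"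
    using X S T by (simp add: mult_add_distrib_mat[OF X, of _ m] mat_trace_add[of _ m])
  moreover have "mat_trace (X * (X * T)) = mat_trace (X * (T * X))"
    using mat_trace_mult_comm[of X m m "X * T"] X T by simp
  ultimately have "mat_trace (X * (S * X)) = 0"
    using pos_def_sandwich_trace_nonneg[OF X X_sym] S T S_pos T_pos by (smt (verit))
  then have "X = 0\<^sub>m m m"
    by (rule pos_def_sandwich_trace_eq_0[OF X X_sym S S_pos])
  have "S $$ (i,j) = T $$ (i,j)" if "i < m" "j < m" for i j
  proof -
    have "S $$ (i,j) - T $$ (i,j) = X $$ (i,j)"
      unfolding X_def using T that by simp
    then show ?thesis
      using \<open>X = 0\<^sub>m m m\<close> that by simp
  qed
  then show "S = T"
    using S T by (intro eq_matI) auto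
qed

lemma pd_sqrt_mat_eqI:
  assumes M: "M \<in> carrier_mat m m" and S: "S \<in> carrier_mat m m"
    and sym: "transpose_mat S = S" and pos: "pos_def_mat m S" and sq: "S * S = M"
  shows "pd_sqrt_mat M = S"
  unfolding pd_sqrt_mat_def
proof (rule the_equality)
  fix T assume "T \<in> carrier_mat (dim_row M) (dim_row M) \<and> transpose_mat T = T \<and>
    (\<forall>v\<in>carrier_vec (dim_row M). v \<noteq> 0\<^sub>v (dim_row M) \<longrightarrow> 0 < v \<bullet> (T *\<^sub>v v)) \<and> T * T = M"
  then show "T = S"
    using pos_def_sqrt_unique[OF _ S _ sym _ pos] M sq unfolding pos_def_mat_def by auto
qed (use M S sym pos sq in \<open>auto simp: pos_def_mat_def\<close>)

lemma inv_mat_eqI: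
  assumes S: "S \<in> carrier_mat m m" and B: "B \<in> carrier_mat m m" and SB: "S * B = 1\<^sub>m m"
  shows "inv_mat S = B"
  unfolding inv_mat_def
proof (rule the_equality)
  fix C assume "C \<in> carrier_mat (dim_row S) (dim_row S) \<and> S * C = 1\<^sub>m (dim_row S) \<and> C * S = 1\<^sub>m (dim_row S)"
  then have C: "C \<in> carrier_mat m m" and CS: "C * S = 1\<^sub>m m"
    using S by auto
  have "C = C * (S * B)"
    using C SB by simp
  also have "\<dots> = B"
    using C S B CS by (simp flip: assoc_mult_mat)
  finally show "C = B" .
qed (use S B SB mat_mult_left_right_inverse[OF S B SB] in auto)

section \<open>Conjugation by orthogonal matrices\<close>

lemma orthogonal_conj_mult:
  fixes Q :: "'a::comm_ring_1 mat"
  assumes Q: "Q \<in> carrier_mat m m" and orth: "transpose_mat Q * Q = 1\<^sub>m m"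
    and X: "X \<in> carrier_mat m m" and Y: "Y \<in> carrier_mat m m"
  shows "(Q * X * transpose_mat Q) * (Q * Y * transpose_mat Q) = Q * (X * Y) * transpose_mat Q"
proof -
  have "(Q * X * transpose_mat Q) * (Q * Y * transpose_mat Q)
      = Q * (X * ((transpose_mat Q * Q) * (Y * transpose_mat Q)))"
    using Q X Y by (simp add: assoc_mult_mat[of _ m m _ m _ m])
  also have "\<dots> = Q * (X * Y) * transpose_mat Q"
    unfolding orth using Q X Y by (simp add: assoc_mult_mat[of _ m m _ m _ m])
  finally show ?thesis .
qed

lemma orthogonal_conj_transpose:
  fixes Q :: "'a::comm_ring_1 mat"
  assumes Q: "Q \<in> carrier_mat m m" and X: "X \<in> carrier_mat m m"
  shows "transpose_mat (Q * X * transpose_mat Q) = Q * transpose_mat X * transpose_mat Q"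
  using Q X by (simp add: transpose_mult[of _ m m _ m] assoc_mult_mat[of _ m m _ m _ m])

lemma pos_def_orthogonal_conj:
  assumes Q: "Q \<in> carrier_mat m m" and orth: "Q * transpose_mat Q = 1\<^sub>m m"
    and X: "X \<in> carrier_mat m m" and pos: "pos_def_mat m X"
  shows "pos_def_mat m (Q * X * transpose_mat Q)"
  unfolding pos_def_mat_def
proof (intro ballI impI)
  fix v :: "real vec" assume v: "v \<in> carrier_vec m" and "v \<noteq> 0\<^sub>v m"
  define w where "w = transpose_mat Q *\<^sub>v v"
  have w: "w \<in> carrier_vec m"
    unfolding w_def using Q v by simp
  have "Q *\<^sub>v w = v"
    unfolding w_def using Q v by (simp flip: assoc_mult_mat_vec add: orth)
  then have "w \<noteq> 0\<^sub>v m"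
    using \<open>v \<noteq> 0\<^sub>v m\<close> Q by auto
  have "v \<bullet> ((Q * X * transpose_mat Q) *\<^sub>v v) = v \<bullet> (Q *\<^sub>v (X *\<^sub>v w))"
    unfolding w_def using Q X v by (simp add: assoc_mult_mat_vec[of _ m m _ m])
  also have "\<dots> = w \<bullet> (X *\<^sub>v w)"
    unfolding w_def using Q X v w by (simp add: transpose_vec_mult_scalar[of Q m m])
  finally show "v \<bullet> ((Q * X * transpose_mat Q) *\<^sub>v v) > 0"
    using pos w \<open>w \<noteq> 0\<^sub>v m\<close> unfolding pos_def_mat_def by simp
qed

lemma polar_factor_orthogonal_conj:
  fixes Q G S S' :: "real mat"
  assumes Q: "Q \<in> carrier_mat m m" and orth: "transpose_mat Q * Q = 1\<^sub>m m"
    and G: "G \<in> carrier_mat m m" and S: "S \<in> carrier_mat m m" and S': "S' \<in> carrier_mat m m"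
    and sym: "transpose_mat S = S" and pos: "pos_def_mat m S"
    and sq: "S * S = transpose_mat G * G" and inv: "S * S' = 1\<^sub>m m"
  defines "Qconj X \<equiv> Q * X * transpose_mat Q"
  shows "Qconj G * inv_mat (pd_sqrt_mat (transpose_mat (Qconj G) * Qconj G)) = Qconj (G * S')"
proof -
  have conj_carrier: "Qconj X \<in> carrier_mat m m" if "X \<in> carrier_mat m m" for X
    unfolding Qconj_def using Q that by auto
  have conj_mult: "Qconj X * Qconj Y = Qconj (X * Y)"
    if "X \<in> carrier_mat m m" "Y \<in> carrier_mat m m" for X Y
    unfolding Qconj_def by (rule orthogonal_conj_mult[OF Q orth that])
  have orth': "Q * transpose_mat Q = 1\<^sub>m m"
    using mat_mult_left_right_inverse[OF _ Q orth] Q by simp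
  have "transpose_mat (Qconj G) * Qconj G = Qconj (transpose_mat G) * Qconj G"
    unfolding Qconj_def orthogonal_conj_transpose[OF Q G] ..
  also have "\<dots> = Qconj S * Qconj S"
    using G S by (simp only: conj_mult transpose_carrier_mat sq)
  also have "pd_sqrt_mat \<dots> = Qconj S"
  proof (rule pd_sqrt_mat_eqI)
    show "Qconj S \<in> carrier_mat m m"
      using conj_carrier[OF S] .
    show "transpose_mat (Qconj S) = Qconj S"
      unfolding Qconj_def orthogonal_conj_transpose[OF Q S] sym ..
    show "pos_def_mat m (Qconj S)"
      unfolding Qconj_def by (rule pos_def_orthogonal_conj[OF Q orth' S pos])
  qed (use conj_carrier[OF S] in simp_all)
  also have "inv_mat (Qconj S) = Qconj S'"
  proof (rule inv_mat_eqI[OF conj_carrier[OF S] conj_carrier[OF S']])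
    have "Qconj S * Qconj S' = Qconj (1\<^sub>m m)"
      using conj_mult[OF S S'] inv by simp
    then show "Qconj S * Qconj S' = 1\<^sub>m m"
      using Q orth' by (simp add: Qconj_def)
  qed
  finally show ?thesis
    using conj_mult G S' by simp
qed

section \<open>Matrices of diagonal blocks\<close>

text \<open>Pairing the coordinates \<open>k\<close> and \<open>n + k\<close>, this is the direct sum of the 2x2 matrices
  \<open>[[a k, b k], [c k, d k]]\<close>.\<close>
definition diag_four_block_mat ::
    "nat \<Rightarrow> (nat \<Rightarrow> 'a::zero) \<Rightarrow> (nat \<Rightarrow> 'a) \<Rightarrow> (nat \<Rightarrow> 'a) \<Rightarrow> (nat \<Rightarrow> 'a) \<Rightarrow> 'a mat" where
  "diag_four_block_mat n a b c d =
     four_block_mat (mat_diag n a) (mat_diag n b) (mat_diag n c) (mat_diag n d)"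

lemma diag_four_block_mat_carrier [simp]: "diag_four_block_mat n a b c d \<in> carrier_mat (n+n) (n+n)"
  unfolding diag_four_block_mat_def by auto

lemma diag_four_block_mat_dim [simp]:
  "dim_row (diag_four_block_mat n a b c d) = n+n" "dim_col (diag_four_block_mat n a b c d) = n+n"
  unfolding diag_four_block_mat_def by (simp_all add: mat_diag_def)

lemma mat_diag_dims [simp]: "dim_row (mat_diag n f) = n" "dim_col (mat_diag n f) = n"
  unfolding mat_diag_def by simp_all

lemma index_diag_four_block_mat:
  assumes "i < n+n" "j < n+n"
  shows "diag_four_block_mat n a b c d $$ (i,j) =
    (if i < n then if j < n then (if i = j then a j else 0) else (if i = j - n then b i else 0)
     else if j < n then (if i - n = j then c j else 0) else (if i = j then d (j - n) else 0))"
  using assms unfolding diag_four_block_mat_def by (auto simp: mat_diag_def)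

lemma diag_four_block_mat_cong:
  assumes "\<And>k. k < n \<Longrightarrow> a k = a' k \<and> b k = b' k \<and> c k = c' k \<and> d k = d' k"
  shows "diag_four_block_mat n a b c d = diag_four_block_mat n a' b' c' d'"
  using assms by (intro eq_matI) (auto simp: index_diag_four_block_mat)

lemma mat_diag_add:
  fixes f :: "nat \<Rightarrow> 'a::monoid_add"
  shows "mat_diag n f + mat_diag n g = mat_diag n (\<lambda>k. f k + g k)"
  by (rule eq_matI) (auto simp: mat_diag_def)

lemma diag_four_block_mat_mult:
  fixes a :: "nat \<Rightarrow> 'a::comm_ring_1"
  shows "diag_four_block_mat n a b c d * diag_four_block_mat n a' b' c' d' =
    diag_four_block_mat n (\<lambda>k. a k * a' k + b k * c' k) (\<lambda>k. a k * b' k + b k * d' k)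
      (\<lambda>k. c k * a' k + d k * c' k) (\<lambda>k. c k * b' k + d k * d' k)"
  unfolding diag_four_block_mat_def
  by (subst mult_four_block_mat[OF mat_diag_dim mat_diag_dim mat_diag_dim mat_diag_dim
        mat_diag_dim mat_diag_dim mat_diag_dim mat_diag_dim]) (simp add: mat_diag_add)

lemma diag_four_block_mat_transpose:
  "transpose_mat (diag_four_block_mat n a b c d) = diag_four_block_mat n a c b d"
  by (intro eq_matI) (auto simp: index_diag_four_block_mat)

lemma map_diag_four_block_mat:
  "h 0 = 0 \<Longrightarrow> map_mat h (diag_four_block_mat n a b c d) =
     diag_four_block_mat n (\<lambda>k. h (a k)) (\<lambda>k. h (b k)) (\<lambda>k. h (c k)) (\<lambda>k. h (d k))"
  by (intro eq_matI) (auto simp: index_diag_four_block_mat)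

lemma diag_four_block_mat_one:
  "diag_four_block_mat n (\<lambda>_. 1) (\<lambda>_. 0) (\<lambda>_. 0) (\<lambda>_. 1) = (1\<^sub>m (n+n) :: 'a::{zero,one} mat)"
  by (intro eq_matI) (auto simp: index_diag_four_block_mat)

lemma mat_diag_mult_vec:
  assumes "x \<in> carrier_vec n"
  shows "mat_diag n f *\<^sub>v x = vec n (\<lambda>i. f i * x $ i)"
  using assms by (intro eq_vecI) (auto simp: mat_diag_def mult_mat_vec_def scalar_prod_def
      if_distrib[of "\<lambda>z. z * _"] cong: if_cong)

lemma diag_four_block_mat_quadratic_form:
  fixes w :: "'a::comm_ring_1 vec"
  assumes w: "w \<in> carrier_vec (n+n)"
  shows "w \<bullet> (diag_four_block_mat n a b c d *\<^sub>v w) =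
    (\<Sum>i<n. a i * (w$i)\<^sup>2 + (b i + c i) * w$i * w$(n+i) + d i * (w$(n+i))\<^sup>2)"
proof -
  define x where "x = vec_first w n"
  define y where "y = vec_last w n"
  have x: "x \<in> carrier_vec n" and y: "y \<in> carrier_vec n" and w_xy: "w = x @\<^sub>v y"
    unfolding x_def y_def using w by auto
  have "diag_four_block_mat n a b c d *\<^sub>v w =
      vec n (\<lambda>i. a i * x$i + b i * y$i) @\<^sub>v vec n (\<lambda>i. c i * x$i + d i * y$i)"
    unfolding diag_four_block_mat_def w_xy
    using four_block_mat_mult_vec[OF mat_diag_dim mat_diag_dim mat_diag_dim mat_diag_dim x y] x y
    by (simp add: mat_diag_mult_vec) (intro conjI eq_vecI; simp)
  then have "w \<bullet> (diag_four_block_mat n a b c d *\<^sub>v w) =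
      (\<Sum>i<n. x$i * (a i * x$i + b i * y$i)) + (\<Sum>i<n. y$i * (c i * x$i + d i * y$i))"
    using x y
    by (simp add: w_xy scalar_prod_append[OF x y, of "vec n _" "vec n _"])
       (simp add: scalar_prod_def lessThan_atLeast0)
  also have "\<dots> = (\<Sum>i<n. a i * (w$i)\<^sup>2 + (b i + c i) * w$i * w$(n+i) + d i * (w$(n+i))\<^sup>2)"
    unfolding sum.distrib[symmetric] using w
    by (intro sum.cong) (auto simp: x_def y_def vec_first_def vec_last_def power2_eq_square algebra_simps)
  finally show ?thesis .
qed

lemma pos_def_diag_four_block_mat:
  assumes pos: "\<And>k x y. k < n \<Longrightarrow> (x, y) \<noteq> (0, 0) \<Longrightarrow> a k * x\<^sup>2 + (b k + c k) * x * y + d k * y\<^sup>2 > 0"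
  shows "pos_def_mat (n+n) (diag_four_block_mat n a b c d)"
  unfolding pos_def_mat_def
proof (intro ballI impI)
  fix w :: "real vec" assume w: "w \<in> carrier_vec (n+n)" and "w \<noteq> 0\<^sub>v (n+n)"
  define q where "q k = a k * (w$k)\<^sup>2 + (b k + c k) * w$k * w$(n+k) + d k * (w$(n+k))\<^sup>2" for k
  obtain t where t: "t < n+n" "w $ t \<noteq> 0"
    using \<open>w \<noteq> 0\<^sub>v (n+n)\<close> w by (metis eq_vecI carrier_vecD index_zero_vec)
  define k where "k = (if t < n then t else t - n)"
  have "k < n" "(w$k, w$(n+k)) \<noteq> (0, 0)"
    using t unfolding k_def by auto
  then have "q k > 0"
    unfolding q_def by (rule pos)
  moreover have "q i \<ge> 0" if "i < n" for i
    using pos[OF that, of "w$i" "w$(n+i)"] unfolding q_def by (cases "(w$i, w$(n+i)) = (0, 0)") auto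
  ultimately have "(\<Sum>i<n. q i) > 0"
    using \<open>k < n\<close> by (intro sum_pos2[of _ k]) auto
  then show "w \<bullet> (diag_four_block_mat n a b c d *\<^sub>v w) > 0"
    unfolding diag_four_block_mat_quadratic_form[OF w] q_def .
qed

lemma mult_col_eq_diag_smult_col:
  fixes U :: "'a::field mat"
  assumes U: "U \<in> carrier_mat m m" and W: "W \<in> carrier_mat m m" and D: "D \<in> carrier_mat m m"
    and diag: "diagonal_mat D" and UW: "U * W = W * D" and j: "j < m"
  shows "U *\<^sub>v col W j = D $$ (j,j) \<cdot>\<^sub>v col W j"
proof -
  have col_D: "col D j = D $$ (j,j) \<cdot>\<^sub>v unit_vec m j"
    using D diag j by (intro eq_vecI) (auto simp: diagonal_mat_def)
  have "U *\<^sub>v col W j = col (W * D) j"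
    using col_mult2[OF U W j] by (simp add: UW)
  also have "\<dots> = D $$ (j,j) \<cdot>\<^sub>v (W *\<^sub>v unit_vec m j)"
    unfolding col_mult2[OF W D j] col_D by (rule mult_mat_vec[OF W unit_vec_carrier])
  also have "W *\<^sub>v unit_vec m j = col W j"
    using W j by (intro eq_vecI) auto
  finally show ?thesis .
qed

lemma diagonal_diag_four_block_mat: "diagonal_mat (diag_four_block_mat n p (\<lambda>_. 0) (\<lambda>_. 0) q)"
  unfolding diagonal_mat_def by (auto simp: index_diag_four_block_mat)

lemma char_poly_diag_four_block_mat:
  fixes p :: "nat \<Rightarrow> 'a::comm_ring_1"
  shows "char_poly (diag_four_block_mat n p (\<lambda>_. 0) (\<lambda>_. 0) q) = (\<Prod>j<n. [:- p j, 1:] * [:- q j, 1:])"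
proof -
  let ?D = "diag_four_block_mat n p (\<lambda>_. 0) (\<lambda>_. 0) q"
  have "upper_triangular ?D"
    using diagonal_diag_four_block_mat[of n p q] by (auto simp: diagonal_mat_def)
  then have "char_poly ?D = (\<Prod>a\<leftarrow>diag_mat ?D. [:- a, 1:])"
    by (intro char_poly_upper_triangular[of _ "n+n"]) auto
  also have "diag_mat ?D = map p [0..<n] @ map q [0..<n]"
    by (auto simp: diag_mat_def list_eq_iff_nth_eq nth_append index_diag_four_block_mat)
  also have "(\<Prod>a\<leftarrow>map p [0..<n] @ map q [0..<n]. [:- a, 1:]) = (\<Prod>j<n. [:- p j, 1:]) * (\<Prod>j<n. [:- q j, 1:])"
    by (simp add: prod.distinct_set_conv_list[symmetric] atLeast0LessThan)
  finally show ?thesis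
    by (simp only: prod.distrib)
qed

section \<open>The blocks of \<open>G\<close> and \<open>U\<close>\<close>

lemma cos_sin_two_arctan_root:
  fixes m :: real
  defines "r \<equiv> sqrt (m\<^sup>2 + 4)"
  shows "cos (2 * arctan ((r + m) / 2)) = - m / r" and "sin (2 * arctan ((r + m) / 2)) = 2 / r"
proof -
  define l where "l = (r + m) / 2"
  have r_sq: "r\<^sup>2 = m\<^sup>2 + 4"
    unfolding r_def by simp
  have "\<bar>m\<bar> < r"
    unfolding r_def by (rule real_less_rsqrt) simp
  then have "l > 0"
    unfolding l_def by auto
  have sqrt_l: "(sqrt (1 + l\<^sup>2))\<^sup>2 = 1 + l\<^sup>2"
    by simp
  \<comment> \<open>\<open>l\<close> solves \<open>l - 1/l = m\<close>, hence \<open>1 + l\<^sup>2 = l r\<close> and \<open>1 - l\<^sup>2 = - l m\<close>.\<close>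
  have one_plus: "1 + l\<^sup>2 = l * r" and one_minus: "1 - l\<^sup>2 = - l * m"
    unfolding l_def using r_sq by (simp_all add: power2_eq_square field_simps)
  have "cos (2 * arctan l) = (1 - l\<^sup>2) / (1 + l\<^sup>2)"
    unfolding cos_double cos_arctan sin_arctan power_divide sqrt_l by (simp add: diff_divide_distrib)
  also have "\<dots> = - m / r"
    unfolding one_plus one_minus using \<open>l > 0\<close> by simp
  finally show "cos (2 * arctan ((r + m) / 2)) = - m / r"
    unfolding l_def .
  have "sin (2 * arctan l) = 2 * l / (1 + l\<^sup>2)"
    unfolding sin_double cos_arctan sin_arctan using sqrt_l by (simp add: power2_eq_square)
  also have "\<dots> = 2 / r"
    unfolding one_plus using \<open>l > 0\<close> by simp
  finally show "sin (2 * arctan ((r + m) / 2)) = 2 / r"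
    unfolding l_def .
qed

definition G_blocks :: "nat \<Rightarrow> (nat \<Rightarrow> real) \<Rightarrow> real mat" where
  "G_blocks n \<mu> = diag_four_block_mat n (\<lambda>_. 0) (\<lambda>_. 1) (\<lambda>_. -1) (\<lambda>k. - \<mu> k)"

text \<open>A 2x2 positive definite \<open>M\<close> with \<open>det M = 1\<close> has the square root
  \<open>(M + I) / sqrt (trace M + 2)\<close>; here \<open>M = [[1, \<mu>], [\<mu>, 1 + \<mu>\<^sup>2]]\<close> is a block of \<open>G\<^sup>T G\<close>
  and \<open>r k\<close> stands for \<open>sqrt ((\<mu> k)\<^sup>2 + 4)\<close>.  The inverse is the adjugate.\<close>
definition GtG_sqrt_blocks :: "nat \<Rightarrow> (nat \<Rightarrow> real) \<Rightarrow> (nat \<Rightarrow> real) \<Rightarrow> real mat" where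
  "GtG_sqrt_blocks n \<mu> r = diag_four_block_mat n
     (\<lambda>k. 2 / r k) (\<lambda>k. \<mu> k / r k) (\<lambda>k. \<mu> k / r k) (\<lambda>k. (2 + (\<mu> k)\<^sup>2) / r k)"

definition GtG_sqrt_inv_blocks :: "nat \<Rightarrow> (nat \<Rightarrow> real) \<Rightarrow> (nat \<Rightarrow> real) \<Rightarrow> real mat" where
  "GtG_sqrt_inv_blocks n \<mu> r = diag_four_block_mat n
     (\<lambda>k. (2 + (\<mu> k)\<^sup>2) / r k) (\<lambda>k. - \<mu> k / r k) (\<lambda>k. - \<mu> k / r k) (\<lambda>k. 2 / r k)"

lemma GtG_sqrt_blocks_sq:
  assumes "\<And>k. k < n \<Longrightarrow> r k > 0 \<and> (r k)\<^sup>2 = (\<mu> k)\<^sup>2 + 4"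
  shows "GtG_sqrt_blocks n \<mu> r * GtG_sqrt_blocks n \<mu> r = transpose_mat (G_blocks n \<mu>) * G_blocks n \<mu>"
  unfolding GtG_sqrt_blocks_def G_blocks_def diag_four_block_mat_transpose diag_four_block_mat_mult
  apply (rule diag_four_block_mat_cong)
  subgoal premises k for k
  proof -
    have "r k \<noteq> 0" "(r k)\<^sup>2 = (\<mu> k)\<^sup>2 + 4"
      using assms[OF k] by auto
    \<comment> \<open>Qualified, since the imported HOL-Algebra shadows the Groebner basis method \<open>algebra\<close>.\<close>
    then show ?thesis
      by (simp add: field_simps) (Groebner_Basis.algebra)
  qed
  done

lemma GtG_sqrt_blocks_inv:
  assumes "\<And>k. k < n \<Longrightarrow> r k > 0 \<and> (r k)\<^sup>2 = (\<mu> k)\<^sup>2 + 4"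
  shows "GtG_sqrt_blocks n \<mu> r * GtG_sqrt_inv_blocks n \<mu> r = 1\<^sub>m (n+n)"
  unfolding GtG_sqrt_blocks_def GtG_sqrt_inv_blocks_def diag_four_block_mat_mult
    diag_four_block_mat_one[symmetric]
  apply (rule diag_four_block_mat_cong)
  subgoal premises k for k
  proof -
    have "r k \<noteq> 0" "(r k)\<^sup>2 = (\<mu> k)\<^sup>2 + 4"
      using assms[OF k] by auto
    then show ?thesis
      by (simp add: field_simps) (Groebner_Basis.algebra)
  qed
  done

lemma GtG_sqrt_blocks_symmetric: "transpose_mat (GtG_sqrt_blocks n \<mu> r) = GtG_sqrt_blocks n \<mu> r"
  unfolding GtG_sqrt_blocks_def diag_four_block_mat_transpose ..

lemma pos_def_GtG_sqrt_blocks: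
  assumes "\<And>k. k < n \<Longrightarrow> r k > 0"
  shows "pos_def_mat (n+n) (GtG_sqrt_blocks n \<mu> r)"
  unfolding GtG_sqrt_blocks_def
proof (rule pos_def_diag_four_block_mat)
  fix k x y assume "k < n" "(x, y) \<noteq> (0::real, 0::real)"
  have "x\<^sup>2 + y\<^sup>2 > 0"
    using \<open>(x, y) \<noteq> (0, 0)\<close> by (simp add: sum_power2_gt_zero_iff)
  then have "x\<^sup>2 + (x + \<mu> k * y)\<^sup>2 + 2 * y\<^sup>2 > 0"
    using zero_le_power2[of "x + \<mu> k * y"] zero_le_power2[of y] by linarith
  also have "x\<^sup>2 + (x + \<mu> k * y)\<^sup>2 + 2 * y\<^sup>2 = 2 * x\<^sup>2 + 2 * \<mu> k * x * y + (2 + (\<mu> k)\<^sup>2) * y\<^sup>2"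
    by (simp add: power2_eq_square algebra_simps)
  also have "\<dots> = r k * (2 / r k * x\<^sup>2 + (\<mu> k / r k + \<mu> k / r k) * x * y + (2 + (\<mu> k)\<^sup>2) / r k * y\<^sup>2)"
    using assms[OF \<open>k < n\<close>] by (simp add: field_simps)
  finally show "2 / r k * x\<^sup>2 + (\<mu> k / r k + \<mu> k / r k) * x * y + (2 + (\<mu> k)\<^sup>2) / r k * y\<^sup>2 > 0"
    using assms[OF \<open>k < n\<close>] by (simp add: zero_less_mult_iff)
qed

lemma G_blocks_mult_GtG_sqrt_inv:
  "G_blocks n \<mu> * GtG_sqrt_inv_blocks n \<mu> r = diag_four_block_mat n
     (\<lambda>k. - \<mu> k / r k) (\<lambda>k. 2 / r k) (\<lambda>k. - 2 / r k) (\<lambda>k. - \<mu> k / r k)"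
  unfolding G_blocks_def GtG_sqrt_inv_blocks_def diag_four_block_mat_mult
  by (intro diag_four_block_mat_cong)
     (simp add: power2_eq_square add_divide_distrib[symmetric] diff_divide_distrib[symmetric] algebra_simps)

definition rotation_blocks :: "nat \<Rightarrow> (nat \<Rightarrow> real) \<Rightarrow> real mat" where
  "rotation_blocks n \<theta> = diag_four_block_mat n
     (\<lambda>k. cos (\<theta> k)) (\<lambda>k. sin (\<theta> k)) (\<lambda>k. - sin (\<theta> k)) (\<lambda>k. cos (\<theta> k))"

definition rotation_eigvec_blocks :: "nat \<Rightarrow> complex mat" where
  "rotation_eigvec_blocks n = diag_four_block_mat n
     (\<lambda>_. of_real (1 / sqrt 2)) (\<lambda>_. of_real (1 / sqrt 2))
     (\<lambda>_. \<i> * of_real (1 / sqrt 2)) (\<lambda>_. - \<i> * of_real (1 / sqrt 2))"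

definition rotation_eigvec_inv_blocks :: "nat \<Rightarrow> complex mat" where
  "rotation_eigvec_inv_blocks n = diag_four_block_mat n
     (\<lambda>_. of_real (1 / sqrt 2)) (\<lambda>_. - \<i> * of_real (1 / sqrt 2))
     (\<lambda>_. of_real (1 / sqrt 2)) (\<lambda>_. \<i> * of_real (1 / sqrt 2))"

lemma rotation_blocks_carrier [simp]: "rotation_blocks n \<theta> \<in> carrier_mat (n+n) (n+n)"
  unfolding rotation_blocks_def by simp

lemma rotation_eigvec_blocks_carrier [simp]: "rotation_eigvec_blocks n \<in> carrier_mat (n+n) (n+n)"
  unfolding rotation_eigvec_blocks_def by simp

lemma rotation_eigvec_inv_blocks_carrier [simp]:
  "rotation_eigvec_inv_blocks n \<in> carrier_mat (n+n) (n+n)"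
  unfolding rotation_eigvec_inv_blocks_def by simp

lemma rotation_eigvec_blocks_inverse:
  "rotation_eigvec_blocks n * rotation_eigvec_inv_blocks n = 1\<^sub>m (n+n)"
proof -
  have "of_real (1 / sqrt 2) * of_real (1 / sqrt 2) = (1 / 2 :: complex)"
    by (simp flip: of_real_mult)
  then show ?thesis
    unfolding rotation_eigvec_blocks_def rotation_eigvec_inv_blocks_def diag_four_block_mat_mult
      diag_four_block_mat_one[symmetric]
    by (intro diag_four_block_mat_cong) (simp add: algebra_simps)
qed

lemma rotation_blocks_diagonalization:
  "map_mat complex_of_real (rotation_blocks n \<theta>) * rotation_eigvec_blocks n =
     rotation_eigvec_blocks n * diag_four_block_mat n
       (\<lambda>k. of_real (cos (\<theta> k)) + \<i> * of_real (sin (\<theta> k))) (\<lambda>_. 0) (\<lambda>_. 0)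
       (\<lambda>k. of_real (cos (\<theta> k)) - \<i> * of_real (sin (\<theta> k)))"
  unfolding rotation_blocks_def rotation_eigvec_blocks_def map_diag_four_block_mat[of complex_of_real, OF of_real_0]
    diag_four_block_mat_mult
  by (intro diag_four_block_mat_cong) (simp add: algebra_simps)

lemma cos_plus_i_sin_eq_exp:
  "complex_of_real (cos t) + \<i> * complex_of_real (sin t) = exp (\<i> * complex_of_real t)"
  "complex_of_real (cos t) - \<i> * complex_of_real (sin t) = exp (- \<i> * complex_of_real t)"
  using cis_conv_exp[of t] cis_conv_exp[of "- t"] by (simp_all add: complex_eq_iff)

section \<open>The orthonormal eigenbasis of \<open>L\<close>\<close>

locale orthonormal_eigenbasis =
  fixes n :: nat and L :: "real mat" and \<phi> :: "nat \<Rightarrow> real vec" and \<mu> :: "nat \<Rightarrow> real"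
  assumes L_carrier: "L \<in> carrier_mat n n"
    and eigvec_carrier: "\<And>j. j < n \<Longrightarrow> \<phi> j \<in> carrier_vec n"
    and eigvec: "\<And>j. j < n \<Longrightarrow> L *\<^sub>v \<phi> j = \<mu> j \<cdot>\<^sub>v \<phi> j"
    and orthonormal: "\<And>i j. i < n \<Longrightarrow> j < n \<Longrightarrow> \<phi> i \<bullet> \<phi> j = (if i = j then 1 else 0)"
begin

definition eigvec_mat :: "real mat" where
  "eigvec_mat = mat_of_cols n (map \<phi> [0..<n])"

definition Q :: "real mat" where
  "Q = four_block_mat eigvec_mat (0\<^sub>m n n) (0\<^sub>m n n) eigvec_mat"

definition angle :: "nat \<Rightarrow> real" where
  "angle k = 2 * arctan ((sqrt ((\<mu> k)\<^sup>2 + 4) + \<mu> k) / 2)"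

lemma eigvec_mat_carrier [simp]: "eigvec_mat \<in> carrier_mat n n"
  unfolding eigvec_mat_def by (metis length_map length_upt minus_nat.diff_0 mat_of_cols_carrier(1))

lemma eigvec_mat_dim [simp]: "dim_row eigvec_mat = n" "dim_col eigvec_mat = n"
  using eigvec_mat_carrier by blast+

lemma col_eigvec_mat: "j < n \<Longrightarrow> col eigvec_mat j = \<phi> j"
  unfolding eigvec_mat_def using eigvec_carrier by simp

lemma eigvec_mat_orthogonal: "transpose_mat eigvec_mat * eigvec_mat = 1\<^sub>m n"
  using orthonormal by (intro eq_matI) (auto simp: col_eigvec_mat)

lemma L_mult_eigvec_mat: "L * eigvec_mat = eigvec_mat * mat_diag n \<mu>"
proof (rule eq_matI)
  fix i j assume "i < dim_row (eigvec_mat * mat_diag n \<mu>)" "j < dim_col (eigvec_mat * mat_diag n \<mu>)"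
  then have ij: "i < n" "j < n" by auto
  have "(L * eigvec_mat) $$ (i,j) = (L *\<^sub>v \<phi> j) $ i"
    using ij L_carrier by (simp add: col_eigvec_mat)
  also have "\<dots> = \<phi> j $ i * \<mu> j"
    using ij eigvec[OF ij(2)] eigvec_carrier[OF ij(2)] by simp
  also have "\<dots> = (eigvec_mat * mat_diag n \<mu>) $$ (i,j)"
    unfolding mat_diag_mult_right[OF eigvec_mat_carrier]
    using ij col_eigvec_mat[OF ij(2)] eigvec_carrier[OF ij(2)] by (simp add: index_col[symmetric])
  finally show "(L * eigvec_mat) $$ (i,j) = (eigvec_mat * mat_diag n \<mu>) $$ (i,j)" .
qed (use L_carrier in auto)

lemma Q_carrier [simp]: "Q \<in> carrier_mat (n+n) (n+n)"
  unfolding Q_def by simp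

lemma Q_orthogonal: "transpose_mat Q * Q = 1\<^sub>m (n+n)"
proof -
  have P: "eigvec_mat \<in> carrier_mat n n" and PT: "transpose_mat eigvec_mat \<in> carrier_mat n n"
    by auto
  show ?thesis
    unfolding Q_def transpose_four_block_mat[OF P zero_carrier_mat zero_carrier_mat P]
    by (simp add: mult_four_block_mat[OF PT zero_carrier_mat zero_carrier_mat PT P zero_carrier_mat
          zero_carrier_mat P] eigvec_mat_orthogonal)
qed

lemma G_mat_mult_Q: "G_mat n L * Q = Q * G_blocks n \<mu>"
proof -
  have P: "eigvec_mat \<in> carrier_mat n n" and mL: "- L \<in> carrier_mat n n"
    using L_carrier by auto
  have "G_mat n L * Q = four_block_mat (0\<^sub>m n n) eigvec_mat (- eigvec_mat) (- (eigvec_mat * mat_diag n \<mu>))"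
    unfolding G_mat_def Q_def L_mult_eigvec_mat[symmetric] using L_carrier
    by (simp add: mult_four_block_mat[OF zero_carrier_mat one_carrier_mat uminus_carrier_mat[OF one_carrier_mat]
          mL P zero_carrier_mat zero_carrier_mat P])
  also have "\<dots> = Q * G_blocks n \<mu>"
    unfolding Q_def G_blocks_def diag_four_block_mat_def
      mult_four_block_mat[OF P zero_carrier_mat zero_carrier_mat P mat_diag_dim mat_diag_dim
          mat_diag_dim mat_diag_dim]
    by (intro cong_four_block_mat eq_matI) (simp_all add: mat_diag_mult_right[of _ n n])
  finally show ?thesis .
qed

lemma Q_orthogonal_right: "Q * transpose_mat Q = 1\<^sub>m (n+n)"
  using mat_mult_left_right_inverse[OF _ Q_carrier Q_orthogonal] by simp

lemma G_mat_eq: "G_mat n L = Q * G_blocks n \<mu> * transpose_mat Q"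
proof -
  have G: "G_mat n L \<in> carrier_mat (n+n) (n+n)"
    using L_carrier by (simp add: G_mat_def)
  have "G_mat n L = G_mat n L * (Q * transpose_mat Q)"
    unfolding Q_orthogonal_right using G by simp
  also have "\<dots> = Q * G_blocks n \<mu> * transpose_mat Q"
    unfolding assoc_mult_mat[OF G Q_carrier transpose_carrier_mat[THEN iffD2, OF Q_carrier], symmetric]
      G_mat_mult_Q ..
  finally show ?thesis .
qed

lemma U_mat_eq: "U_mat n L = Q * rotation_blocks n angle * transpose_mat Q"
proof -
  define r where "r k = sqrt ((\<mu> k)\<^sup>2 + 4)" for k
  have r: "r k > 0 \<and> (r k)\<^sup>2 = (\<mu> k)\<^sup>2 + 4" for k
    unfolding r_def by (simp add: add_nonneg_pos)
  have "U_mat n L = Q * (G_blocks n \<mu> * GtG_sqrt_inv_blocks n \<mu> r) * transpose_mat Q"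
    unfolding U_mat_def G_mat_eq
    by (rule polar_factor_orthogonal_conj[OF Q_carrier Q_orthogonal _ _ _ GtG_sqrt_blocks_symmetric
          pos_def_GtG_sqrt_blocks GtG_sqrt_blocks_sq GtG_sqrt_blocks_inv])
       (auto simp: G_blocks_def GtG_sqrt_blocks_def GtG_sqrt_inv_blocks_def r)
  also have "G_blocks n \<mu> * GtG_sqrt_inv_blocks n \<mu> r = rotation_blocks n angle"
    unfolding G_blocks_mult_GtG_sqrt_inv rotation_blocks_def angle_def r_def cos_sin_two_arctan_root
    by simp
  finally show ?thesis .
qed

abbreviation U :: "complex mat" where
  "U \<equiv> map_mat complex_of_real (U_mat n L)"

definition Qc :: "complex mat" where
  "Qc = map_mat complex_of_real Q"

definition eigvecs_U :: "complex mat" where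
  "eigvecs_U = Qc * rotation_eigvec_blocks n"

definition eigvals_U :: "complex mat" where
  "eigvals_U = diag_four_block_mat n
     (\<lambda>k. of_real (cos (angle k)) + \<i> * of_real (sin (angle k))) (\<lambda>_. 0) (\<lambda>_. 0)
     (\<lambda>k. of_real (cos (angle k)) - \<i> * of_real (sin (angle k)))"

definition psi :: "complex \<Rightarrow> nat \<Rightarrow> complex vec" where
  "psi z j = of_real (1 / sqrt 2) \<cdot>\<^sub>v (map_vec of_real (\<phi> j) @\<^sub>v (z \<cdot>\<^sub>v map_vec of_real (\<phi> j)))"

lemma Qc_carrier [simp]: "Qc \<in> carrier_mat (n+n) (n+n)"
  unfolding Qc_def by simp

lemma Qc_orthogonal: "transpose_mat Qc * Qc = 1\<^sub>m (n+n)"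
proof -
  have "transpose_mat Qc * Qc = map_mat complex_of_real (transpose_mat Q * Q)"
    unfolding Qc_def map_mat_transpose by (rule of_real_hom.mat_hom_mult[symmetric]) auto
  then show ?thesis
    by (simp add: Q_orthogonal of_real_hom.mat_hom_one)
qed

lemma U_eq: "U = Qc * map_mat complex_of_real (rotation_blocks n angle) * transpose_mat Qc"
  unfolding U_mat_eq Qc_def map_mat_transpose
  by (simp add: of_real_hom.mat_hom_mult[of _ "n+n" "n+n" _ "n+n"] mult_carrier_mat[of _ "n+n" "n+n" _ "n+n"])

lemmas U_factor_carriers = Qc_carrier transpose_carrier_mat[THEN iffD2, OF Qc_carrier] rotation_eigvec_blocks_carrier
  map_carrier_mat[THEN iffD2, OF rotation_blocks_carrier]

lemma U_carrier [simp]: "U \<in> carrier_mat (n+n) (n+n)"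
  unfolding U_eq using U_factor_carriers by (simp add: mult_carrier_mat[of _ "n+n" "n+n" _ "n+n"])

lemma eigvecs_U_carrier [simp]: "eigvecs_U \<in> carrier_mat (n+n) (n+n)"
  unfolding eigvecs_U_def using U_factor_carriers by (simp add: mult_carrier_mat[of _ "n+n" "n+n" _ "n+n"])

lemma U_mult_eigvecs: "U * eigvecs_U = eigvecs_U * eigvals_U"
proof -
  let ?R = "map_mat complex_of_real (rotation_blocks n angle)"
  have "U * eigvecs_U = Qc * (?R * ((transpose_mat Qc * Qc) * rotation_eigvec_blocks n))"
    unfolding U_eq eigvecs_U_def using U_factor_carriers
    by (simp add: assoc_mult_mat[of _ "n+n" "n+n" _ "n+n" _ "n+n"] mult_carrier_mat[of _ "n+n" "n+n" _ "n+n"])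
  also have "\<dots> = Qc * (rotation_eigvec_blocks n * eigvals_U)"
    unfolding Qc_orthogonal eigvals_U_def rotation_blocks_diagonalization[symmetric]
    by (simp add: left_mult_one_mat[OF rotation_eigvec_blocks_carrier])
  also have "\<dots> = eigvecs_U * eigvals_U"
    unfolding eigvecs_U_def eigvals_U_def
    by (simp add: assoc_mult_mat[of _ "n+n" "n+n" _ "n+n" _ "n+n"])
  finally show ?thesis .
qed

lemma U_similar_eigvals: "similar_mat U eigvals_U"
proof -
  define W' where "W' = rotation_eigvec_inv_blocks n * transpose_mat Qc"
  have W': "W' \<in> carrier_mat (n+n) (n+n)"
    unfolding W'_def by (simp add: mult_carrier_mat[of _ "n+n" "n+n" _ "n+n"])
  have "eigvecs_U * W' = Qc * ((rotation_eigvec_blocks n * rotation_eigvec_inv_blocks n) * transpose_mat Qc)"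
    unfolding eigvecs_U_def W'_def using U_factor_carriers
    by (simp add: assoc_mult_mat[of _ "n+n" "n+n" _ "n+n" _ "n+n"] mult_carrier_mat[of _ "n+n" "n+n" _ "n+n"])
  also have "\<dots> = 1\<^sub>m (n+n)"
    unfolding rotation_eigvec_blocks_inverse
    using mat_mult_left_right_inverse[OF _ Qc_carrier Qc_orthogonal]
    by (simp add: left_mult_one_mat[of "transpose_mat Qc" "n+n" "n+n"])
  finally have WW': "eigvecs_U * W' = 1\<^sub>m (n+n)" .
  have "U = U * (eigvecs_U * W')"
    unfolding WW' using right_mult_one_mat[OF U_carrier] by simp
  also have "\<dots> = eigvecs_U * eigvals_U * W'"
    unfolding assoc_mult_mat[OF U_carrier eigvecs_U_carrier W', symmetric] U_mult_eigvecs ..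
  finally have "U = eigvecs_U * eigvals_U * W'" .
  moreover have "{U, eigvals_U, eigvecs_U, W'} \<subseteq> carrier_mat (n+n) (n+n)"
    using W' U_carrier by (simp add: eigvals_U_def del: map_carrier_mat)
  ultimately show ?thesis
    using similar_matI WW' mat_mult_left_right_inverse[OF eigvecs_U_carrier W' WW'] by blast
qed

lemma eigvecs_U_blocks:
  defines "\<Phi> \<equiv> map_mat complex_of_real eigvec_mat" and "w \<equiv> complex_of_real (1 / sqrt 2)"
  shows "eigvecs_U = four_block_mat (\<Phi> * mat_diag n (\<lambda>_. w)) (\<Phi> * mat_diag n (\<lambda>_. w))
    (\<Phi> * mat_diag n (\<lambda>_. \<i> * w)) (\<Phi> * mat_diag n (\<lambda>_. - \<i> * w))"
proof -
  have \<Phi>: "\<Phi> \<in> carrier_mat n n"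
    unfolding \<Phi>_def by simp
  have "Qc = four_block_mat \<Phi> (0\<^sub>m n n) (0\<^sub>m n n) \<Phi>"
    unfolding Qc_def Q_def \<Phi>_def
    by (subst map_four_block_mat[OF eigvec_mat_carrier zero_carrier_mat zero_carrier_mat eigvec_mat_carrier])
       (auto intro: cong_four_block_mat)
  then show ?thesis
    unfolding eigvecs_U_def rotation_eigvec_blocks_def diag_four_block_mat_def w_def
    using \<Phi> by (simp add: mult_four_block_mat[OF \<Phi> zero_carrier_mat zero_carrier_mat \<Phi>
          mat_diag_dim mat_diag_dim mat_diag_dim mat_diag_dim])
qed

lemma col_eigvecs_U:
  assumes j: "j < n"
  shows "col eigvecs_U j = psi \<i> j" and "col eigvecs_U (n + j) = psi (- \<i>) j"
proof -
  have index_eigvec_mat: "eigvec_mat $$ (i, j) = \<phi> j $ i" if "i < n" for i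
    using col_eigvec_mat[OF j] that j by (metis eigvec_mat_dim index_col)
  have dim: "dim_vec (\<phi> j) = n"
    using eigvec_carrier[OF j] by simp
  show "col eigvecs_U j = psi \<i> j" and "col eigvecs_U (n + j) = psi (- \<i>) j"
    unfolding eigvecs_U_blocks psi_def using j
    by (intro eq_vecI; simp add: dim mat_diag_mult_right[of _ n n] index_eigvec_mat)+
qed

lemma psi_norm:
  assumes j: "j < n" and z: "cnj z * z = 1"
  shows "psi z j \<bullet>c psi z j = 1"
proof -
  let ?v = "map_vec complex_of_real (\<phi> j)" and ?w = "complex_of_real (1 / sqrt 2)"
  have v: "?v \<in> carrier_vec n"
    using eigvec_carrier[OF j] by simp
  have conj_v: "conjugate ?v = ?v"
    by (intro eq_vecI) simp_all
  have "?v \<bullet> ?v = complex_of_real (\<phi> j \<bullet> \<phi> j)"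
    unfolding scalar_prod_def by simp
  then have v_norm: "?v \<bullet> ?v = 1"
    using orthonormal[OF j j] by simp
  have "conjugate (psi z j) = ?w \<cdot>\<^sub>v (?v @\<^sub>v (cnj z \<cdot>\<^sub>v ?v))"
    unfolding psi_def using v conj_v by (intro eq_vecI) (auto simp: conjugate_smult_vec)
  then have "psi z j \<bullet>c psi z j = ?w * ?w * (?v \<bullet> ?v + z * cnj z * (?v \<bullet> ?v))"
    unfolding psi_def using v by (simp add: scalar_prod_append[of _ n _ n] mult.assoc)
  also have "\<dots> = 1"
    using z v_norm by (simp flip: of_real_mult) (simp add: mult.commute)
  finally show ?thesis .
qed

lemma eigenvector_U:
  assumes j: "j < n"
  shows "eigenvector U (psi \<i> j) (of_real (cos (angle j)) + \<i> * of_real (sin (angle j)))"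
    and "eigenvector U (psi (- \<i>) j) (of_real (cos (angle j)) - \<i> * of_real (sin (angle j)))"
proof -
  have eigen_col: "U *\<^sub>v col eigvecs_U t = eigvals_U $$ (t,t) \<cdot>\<^sub>v col eigvecs_U t" if "t < n+n" for t
    using mult_col_eq_diag_smult_col[OF U_carrier eigvecs_U_carrier _ _ U_mult_eigvecs that]
    by (simp add: eigvals_U_def diagonal_diag_four_block_mat)
  have "psi z j \<noteq> 0\<^sub>v (n+n)" if "cnj z * z = 1" for z
    using psi_norm[OF j that] by auto
  moreover have "psi z j \<in> carrier_vec (n+n)" for z
    using eigvec_carrier[OF j] by (simp add: psi_def)
  ultimately show "eigenvector U (psi \<i> j) (of_real (cos (angle j)) + \<i> * of_real (sin (angle j)))"
    and "eigenvector U (psi (- \<i>) j) (of_real (cos (angle j)) - \<i> * of_real (sin (angle j)))"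
    using eigen_col[of j] eigen_col[of "n+j"] j U_carrier
    by (auto simp: eigenvector_def col_eigvecs_U eigvals_U_def index_diag_four_block_mat)
qed

lemma char_poly_U:
  "char_poly U = (\<Prod>j<n. [:- (of_real (cos (angle j)) + \<i> * of_real (sin (angle j))), 1:] *
                          [:- (of_real (cos (angle j)) - \<i> * of_real (sin (angle j))), 1:])"
  unfolding char_poly_similar[OF U_similar_eigvals] eigvals_U_def char_poly_diag_four_block_mat ..

end

theorem proposition7:
  fixes n :: nat and A :: "real mat" and \<phi> :: "nat \<Rightarrow> real vec" and \<mu> :: "nat \<Rightarrow> real"
  assumes graph: "simple_graph_adj n A"
    and conn: "connected_adj n A"
    and phi_dim: "\<And>j. j < n \<Longrightarrow> \<phi> j \<in> carrier_vec n"
    and phi_eig: "\<And>j. j < n \<Longrightarrow> laplacian n A *\<^sub>v \<phi> j = \<mu> j \<cdot>\<^sub>v \<phi> j"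
    and phi_on: "\<And>i j. i < n \<Longrightarrow> j < n \<Longrightarrow> \<phi> i \<bullet> \<phi> j = (if i = j then 1 else 0)"
  shows "let U = map_mat complex_of_real (U_mat n (laplacian n A));
             lamP = (\<lambda>j. (sqrt ((\<mu> j)\<^sup>2 + 4) + \<mu> j) / 2);
             \<theta> = (\<lambda>j. 2 * arctan (lamP j));
             lp = (\<lambda>j. complex_of_real (cos (\<theta> j)) + \<i> * complex_of_real (sin (\<theta> j)));
             lm = (\<lambda>j. complex_of_real (cos (\<theta> j)) - \<i> * complex_of_real (sin (\<theta> j)));
             \<phi>c = (\<lambda>j. map_vec complex_of_real (\<phi> j));
             \<psi>p = (\<lambda>j. complex_of_real (1 / sqrt 2) \<cdot>\<^sub>v (\<phi>c j @\<^sub>v (\<i> \<cdot>\<^sub>v \<phi>c j)));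
             \<psi>m = (\<lambda>j. complex_of_real (1 / sqrt 2) \<cdot>\<^sub>v (\<phi>c j @\<^sub>v ((- \<i>) \<cdot>\<^sub>v \<phi>c j)))
         in (\<forall>j<n. lp j = exp (\<i> * complex_of_real (\<theta> j)) \<and> lm j = exp (- \<i> * complex_of_real (\<theta> j)) \<and>
                   eigenvector U (\<psi>p j) (lp j) \<and> eigenvector U (\<psi>m j) (lm j) \<and>
                   \<psi>p j \<bullet>c \<psi>p j = 1 \<and> \<psi>m j \<bullet>c \<psi>m j = 1)
            \<and> char_poly U = (\<Prod>j<n. [:- lp j, 1:] * [:- lm j, 1:])"
proof -
  have "laplacian n A \<in> carrier_mat n n"
    using graph unfolding simple_graph_adj_def laplacian_def degree_mat_def by auto
  then interpret orthonormal_eigenbasis n "laplacian n A" \<phi> \<mu>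
    using phi_dim phi_eig phi_on by unfold_locales
  show ?thesis
    unfolding Let_def angle_def[symmetric] psi_def[symmetric]
    using eigenvector_U psi_norm char_poly_U by (simp add: cos_plus_i_sin_eq_exp)
qed

end
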